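(* For $c>0$ let $$\Theta_2(c)=\Big\{\theta\in\Theta_2:\ (\mu_2-\mu_1)^2\,(a_1\wedge (n-a_1))>c\sigma^2\log\log (16n)\Big\},$$ where $\theta_i=\mu_1$ for $i\le a_1$ and $\theta_i=\mu_2$ for $i>a_1$. There exist universal constants $c>0$ (small enough) and $c_1\in(0,1)$ such that $$\inf_{0\leq \phi\leq 1}\Big\{\sup_{\theta\in\Theta_1}\mathbb{E}_\theta\phi+\sup_{\theta\in\Theta_2(c)}\mathbb{E}_{\theta}(1-\phi)\Big\}\geq c_1,$$ where $\mathbb{E}_\theta$ is expectation under $X\sim N(\theta,\sigma^2I_n)$ and the infimum is over all measurable test functions $\phi=\phi(X)\in[0,1]$.
   Context: $\Theta_1=\{\theta\in\mathbb{R}^n:\theta_1=\cdots=\theta_n\}$. $\Theta_2$ is the set of $\theta\in\mathbb{R}^n$ for which there exist an integer $0\le a_1\le n$ and reals $\mu_1,\mu_2$ with $\theta_i=\mu_1$ for $1\le i\le a_1$ and $\theta_i=\mu_2$ for $a_1<i\le n$; in the definition of $\Theta_2(c)$, $(\mu_1,\mu_2,a_1)$ is such a representation of $\theta$. *)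

theory Defs
  imports "HOL-Probability.Probability"
begin

text \<open>Vectors in R^n are functions nat => real, only coordinates i < n matter
  (coordinate i here corresponds to coordinate i+1 in the paper).\<close>

definition gauss_meas :: "nat \<Rightarrow> (nat \<Rightarrow> real) \<Rightarrow> real \<Rightarrow> (nat \<Rightarrow> real) measure" where
  "gauss_meas n \<theta> \<sigma> = PiM {..<n} (\<lambda>i. density lborel (normal_density (\<theta> i) \<sigma>))"

definition Theta1 :: "nat \<Rightarrow> (nat \<Rightarrow> real) set" where
  "Theta1 n = {\<theta>. \<forall>i<n. \<forall>j<n. \<theta> i = \<theta> j}"

definition Theta2 :: "nat \<Rightarrow> (nat \<Rightarrow> real) set" where
  "Theta2 n = {\<theta>. \<exists>a1 \<mu>1 \<mu>2. a1 \<le> n \<and> (\<forall>i<n. \<theta> i = (if i < a1 then \<mu>1 else \<mu>2))}"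

definition Theta2c :: "nat \<Rightarrow> real \<Rightarrow> real \<Rightarrow> (nat \<Rightarrow> real) set" where
  "Theta2c n \<sigma> c = {\<theta> \<in> Theta2 n. \<exists>a1 \<mu>1 \<mu>2. a1 \<le> n \<and> (\<forall>i<n. \<theta> i = (if i < a1 then \<mu>1 else \<mu>2)) \<and>
      (\<mu>2 - \<mu>1)\<^sup>2 * real (min a1 (n - a1)) > c * \<sigma>\<^sup>2 * ln (ln (16 * real n))}"

definition is_test :: "nat \<Rightarrow> ((nat \<Rightarrow> real) \<Rightarrow> real) \<Rightarrow> bool" where
  "is_test n \<phi> \<longleftrightarrow> \<phi> \<in> borel_measurable (PiM {..<n} (\<lambda>_. lborel)) \<and>
     (\<forall>x \<in> space (PiM {..<n} (\<lambda>_. lborel :: real measure)). 0 \<le> \<phi> x \<and> \<phi> x \<le> 1)"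

end

theory Submission
  imports Defs
begin

(* Le Cam's method with a mixture alternative. Put the uniform prior on J spike
   alternatives, J the number of scales with 2 * 4^j <= n: theta_j equals
   sigma sqrt b / 2^j on the first 4^j coordinates and 0 elsewhere, so every theta_j has
   (mu2 - mu1)^2 * a1 = sigma^2 b, and b = ln (1 + J/100) exceeds ln ln (16 n) / 1000.
   A pointwise quadratic bound shows that, for every test, the type I error at
   theta = 0 plus the average type II error is at least 7/4 minus the second moment of
   the likelihood ratio of the mixture, and for Gaussians that moment is the average of
   exp (<theta_j, theta_l> / sigma^2) = exp (b 2^-|j - l|). Convexity of exp and a
   geometric series bound it by 1 + 4 (e^b - 1) / J = 1.04, which leaves 0.71 > 1/2. *)

abbreviation lborel_Pi :: "nat \<Rightarrow> (nat \<Rightarrow> real) measure" where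
  "lborel_Pi n \<equiv> PiM {..<n} (\<lambda>_. lborel)"

lemma product_sigma_finite_lborel: "product_sigma_finite (\<lambda>_::nat. lborel :: real measure)"
  by (simp add: product_sigma_finite_def lborel.sigma_finite_measure_axioms)

lemma product_sigma_finite_normal:
  "\<sigma> > 0 \<Longrightarrow> product_sigma_finite (\<lambda>i::nat. density lborel (normal_density (\<theta> i) \<sigma>))"
  unfolding product_sigma_finite_def
  using prob_space_normal_density prob_space_imp_sigma_finite by metis

definition gauss_pdf :: "nat \<Rightarrow> (nat \<Rightarrow> real) \<Rightarrow> real \<Rightarrow> (nat \<Rightarrow> real) \<Rightarrow> real" where
  "gauss_pdf n \<theta> \<sigma> x = (\<Prod>i<n. normal_density (\<theta> i) \<sigma> (x i))"

lemma gauss_pdf_measurable [measurable]: "gauss_pdf n \<theta> \<sigma> \<in> borel_measurable (lborel_Pi n)"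
  unfolding gauss_pdf_def by measurable

lemma gauss_pdf_pos: "\<sigma> > 0 \<Longrightarrow> 0 < gauss_pdf n \<theta> \<sigma> x"
  unfolding gauss_pdf_def by (simp add: prod_pos normal_density_pos)

lemma indicator_PiE_prod:
  assumes "x \<in> space (lborel_Pi n)"
  shows "indicator (Pi\<^sub>E {..<n} A) x = (\<Prod>i<n. indicator (A i) (x i) :: ennreal)"
proof (cases "x \<in> Pi\<^sub>E {..<n} A")
  case True
  then show ?thesis by (auto simp: indicator_def PiE_def Pi_def)
next
  case False
  then obtain i where "i < n" "x i \<notin> A i"
    using assms by (auto simp: space_PiM PiE_def Pi_def)
  then show ?thesis
    using False by (auto simp: indicator_def intro!: prod_zero bexI[of _ i])
qed

lemma gauss_meas_eq_density:
  assumes "\<sigma> > 0"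
  shows "gauss_meas n \<theta> \<sigma> = density (lborel_Pi n) (gauss_pdf n \<theta> \<sigma>)"
  unfolding gauss_meas_def
proof (rule product_sigma_finite.PiM_eqI[OF product_sigma_finite_normal[OF assms], symmetric])
  show "sets (density (lborel_Pi n) (gauss_pdf n \<theta> \<sigma>)) =
        sets (PiM {..<n} (\<lambda>i. density lborel (normal_density (\<theta> i) \<sigma>)))"
    unfolding sets_density by (rule sets_PiM_cong) simp_all
  fix A assume "\<And>i. i \<in> {..<n} \<Longrightarrow> A i \<in> sets (density lborel (normal_density (\<theta> i) \<sigma>))"
  then have A: "\<And>i. i < n \<Longrightarrow> A i \<in> sets lborel" by simp
  have "emeasure (density (lborel_Pi n) (gauss_pdf n \<theta> \<sigma>)) (Pi\<^sub>E {..<n} A)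
      = (\<integral>\<^sup>+ x. ennreal (gauss_pdf n \<theta> \<sigma> x) * indicator (Pi\<^sub>E {..<n} A) x \<partial>lborel_Pi n)"
    using A by (intro emeasure_density sets_PiM_I_finite) auto
  also have "\<dots> = (\<integral>\<^sup>+ x. (\<Prod>i<n. ennreal (normal_density (\<theta> i) \<sigma> (x i)) * indicator (A i) (x i))
      \<partial>lborel_Pi n)"
    by (intro nn_integral_cong)
       (simp add: indicator_PiE_prod gauss_pdf_def prod_ennreal[symmetric] prod.distrib)
  also have "\<dots> = (\<Prod>i<n. \<integral>\<^sup>+ y. ennreal (normal_density (\<theta> i) \<sigma> y) * indicator (A i) y \<partial>lborel)"
    using A by (intro product_sigma_finite.product_nn_integral_prod[OF product_sigma_finite_lborel]) auto
  also have "\<dots> = (\<Prod>i<n. emeasure (density lborel (normal_density (\<theta> i) \<sigma>)) (A i))"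
    using A by (intro prod.cong refl) (simp add: emeasure_density)
  finally show "emeasure (density (lborel_Pi n) (gauss_pdf n \<theta> \<sigma>)) (Pi\<^sub>E {..<n} A)
      = (\<Prod>i<n. emeasure (density lborel (normal_density (\<theta> i) \<sigma>)) (A i))" .
qed simp

lemma integral_gauss_meas:
  assumes "\<sigma> > 0" and "f \<in> borel_measurable (lborel_Pi n)"
  shows "(\<integral>x. f x \<partial>gauss_meas n \<theta> \<sigma>) = (\<integral>x. gauss_pdf n \<theta> \<sigma> x * f x \<partial>lborel_Pi n)"
  unfolding gauss_meas_eq_density[OF assms(1)]
  using assms by (subst integral_density) (auto simp: less_imp_le gauss_pdf_pos)

lemma integrable_gauss_pdf: "\<sigma> > 0 \<Longrightarrow> integrable (lborel_Pi n) (gauss_pdf n \<theta> \<sigma>)"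
  unfolding gauss_pdf_def
  by (rule product_sigma_finite.product_integrable_prod[OF product_sigma_finite_lborel])
     (auto simp: integrable_normal_density)

lemma integral_gauss_pdf: "\<sigma> > 0 \<Longrightarrow> (\<integral>x. gauss_pdf n \<theta> \<sigma> x \<partial>lborel_Pi n) = 1"
  unfolding gauss_pdf_def
  by (subst product_sigma_finite.product_integral_prod[OF product_sigma_finite_lborel])
     (auto simp: integrable_normal_density integral_normal_density)

lemma is_test_one_minus: "is_test n \<phi> \<Longrightarrow> is_test n (\<lambda>x. 1 - \<phi> x)"
  by (auto simp: is_test_def)

lemma integral_test_le_one:
  assumes "\<sigma> > 0" and "is_test n \<phi>"
  shows "(\<integral>x. \<phi> x \<partial>gauss_meas n \<theta> \<sigma>) \<le> 1"
proof -
  interpret prob_space "gauss_meas n \<theta> \<sigma>"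
    unfolding gauss_meas_def using assms(1) by (intro prob_space_PiM prob_space_normal_density)
  have sets: "sets (gauss_meas n \<theta> \<sigma>) = sets (lborel_Pi n)"
    unfolding gauss_meas_def by (rule sets_PiM_cong) simp_all
  have meas: "\<phi> \<in> borel_measurable (gauss_meas n \<theta> \<sigma>)"
    using assms(2) measurable_cong_sets[OF sets refl] by (auto simp: is_test_def)
  have bounds: "\<forall>x\<in>space (gauss_meas n \<theta> \<sigma>). 0 \<le> \<phi> x \<and> \<phi> x \<le> 1"
    using assms(2) sets_eq_imp_space_eq[OF sets] by (simp add: is_test_def)
  have "integrable (gauss_meas n \<theta> \<sigma>) \<phi>"
    using meas bounds by (intro integrable_const_bound[where B=1]) auto
  then show ?thesis
    using bounds by (intro integral_le_const) auto
qed

lemma normal_density_mult_divide: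
  assumes "\<sigma> > 0"
  shows "normal_density a \<sigma> x * normal_density b \<sigma> x / normal_density 0 \<sigma> x
    = exp (a * b / \<sigma>\<^sup>2) * normal_density (a + b) \<sigma> x"
proof -
  define C where "C = 1 / sqrt (2 * pi * \<sigma>\<^sup>2)"
  have "C > 0" using assms by (simp add: C_def)
  have "exp (-(x - a)\<^sup>2 / (2 * \<sigma>\<^sup>2)) * exp (-(x - b)\<^sup>2 / (2 * \<sigma>\<^sup>2)) / exp (-(x - 0)\<^sup>2 / (2 * \<sigma>\<^sup>2))
     = exp (a * b / \<sigma>\<^sup>2) * exp (-(x - (a + b))\<^sup>2 / (2 * \<sigma>\<^sup>2))"
    unfolding exp_add[symmetric] exp_diff[symmetric]
    using assms by (intro arg_cong[where f=exp]) (simp add: field_simps power2_eq_square)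
  then show ?thesis
    using \<open>C > 0\<close> unfolding normal_density_def C_def[symmetric] by (simp add: field_simps)
qed

lemma gauss_pdf_cross:
  assumes "\<sigma> > 0"
  shows "integrable (lborel_Pi n)
      (\<lambda>x. gauss_pdf n \<theta> \<sigma> x * gauss_pdf n \<eta> \<sigma> x / gauss_pdf n (\<lambda>_. 0) \<sigma> x)" (is "integrable _ ?r")
    and "(\<integral>x. gauss_pdf n \<theta> \<sigma> x * gauss_pdf n \<eta> \<sigma> x / gauss_pdf n (\<lambda>_. 0) \<sigma> x \<partial>lborel_Pi n)
      = exp ((\<Sum>i<n. \<theta> i * \<eta> i) / \<sigma>\<^sup>2)"
proof -
  have r: "?r = (\<lambda>x. \<Prod>i<n. exp (\<theta> i * \<eta> i / \<sigma>\<^sup>2) * normal_density (\<theta> i + \<eta> i) \<sigma> (x i))"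
    unfolding gauss_pdf_def prod.distrib[symmetric] prod_dividef[symmetric]
    using normal_density_mult_divide[OF assms] by simp
  show "integrable (lborel_Pi n) ?r"
    unfolding r
    by (rule product_sigma_finite.product_integrable_prod[OF product_sigma_finite_lborel])
       (auto simp: assms integrable_normal_density)
  have "(\<integral>x. ?r x \<partial>lborel_Pi n) = (\<Prod>i<n. exp (\<theta> i * \<eta> i / \<sigma>\<^sup>2))"
    unfolding r
    by (subst product_sigma_finite.product_integral_prod[OF product_sigma_finite_lborel])
       (auto simp: assms integrable_normal_density integral_normal_density)
  also have "\<dots> = exp ((\<Sum>i<n. \<theta> i * \<eta> i) / \<sigma>\<^sup>2)"
    by (simp add: exp_sum sum_divide_distrib)
  finally show "(\<integral>x. ?r x \<partial>lborel_Pi n) = exp ((\<Sum>i<n. \<theta> i * \<eta> i) / \<sigma>\<^sup>2)" .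
qed

lemma testing_error_pointwise_bound:
  fixes p q f :: real
  assumes "0 < p" "0 \<le> f" "f \<le> 1"
  shows "2 * q - p / 4 - q\<^sup>2 / p \<le> p * f + q * (1 - f)"
proof -
  have "min p q = min p q * f + min p q * (1 - f)"
    by (simp add: algebra_simps)
  also have "\<dots> \<le> p * f + q * (1 - f)"
    using assms by (intro add_mono mult_right_mono) auto
  finally have convex: "min p q \<le> p * f + q * (1 - f)" .
  have "p * (2 * q - p / 4) - q\<^sup>2 \<le> p * min p q"
  proof (cases "p \<le> q")
    case True
    have "0 \<le> (q - p)\<^sup>2 + (p / 2)\<^sup>2" by simp
    then show ?thesis using True by (simp add: min_def power2_eq_square algebra_simps)
  next
    case False
    have "0 \<le> (q - p / 2)\<^sup>2" by simp
    then show ?thesis using False by (simp add: min_def power2_eq_square algebra_simps)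
  qed
  then have "(p * (2 * q - p / 4) - q\<^sup>2) / p \<le> min p q"
    by (simp only: pos_divide_le_eq[OF assms(1)] mult.commute)
  moreover have "(p * (2 * q - p / 4) - q\<^sup>2) / p = 2 * q - p / 4 - q\<^sup>2 / p"
    using assms(1) by (simp add: field_simps)
  ultimately show ?thesis using convex by linarith
qed

lemma second_moment_testing_bound:
  fixes M :: "'a measure" and p q \<phi> :: "'a \<Rightarrow> real"
  assumes p_pos: "\<And>x. x \<in> space M \<Longrightarrow> 0 < p x"
    and int_p: "integrable M p" and int_q: "integrable M q"
    and int_chi: "integrable M (\<lambda>x. (q x)\<^sup>2 / p x)"
    and total_p: "(\<integral>x. p x \<partial>M) = 1" and total_q: "(\<integral>x. q x \<partial>M) = 1"
    and \<phi>_meas: "\<phi> \<in> borel_measurable M"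
    and \<phi>_bounds: "\<And>x. x \<in> space M \<Longrightarrow> 0 \<le> \<phi> x \<and> \<phi> x \<le> 1"
  shows "7/4 - (\<integral>x. (q x)\<^sup>2 / p x \<partial>M) \<le> (\<integral>x. p x * \<phi> x \<partial>M) + (\<integral>x. q x * (1 - \<phi> x) \<partial>M)"
proof -
  have meas: "p \<in> borel_measurable M" "q \<in> borel_measurable M"
    using int_p int_q by auto
  have int_p\<phi>: "integrable M (\<lambda>x. p x * \<phi> x)"
    by (rule Bochner_Integration.integrable_bound[OF int_p])
       (use meas \<phi>_meas \<phi>_bounds in \<open>auto intro!: AE_I2 mult_right_le_one_le simp: abs_mult\<close>)
  have int_q\<phi>: "integrable M (\<lambda>x. q x * (1 - \<phi> x))"
    by (rule Bochner_Integration.integrable_bound[OF int_q])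
       (use meas \<phi>_meas \<phi>_bounds in \<open>auto intro!: AE_I2 mult_right_le_one_le simp: abs_mult\<close>)
  have "7/4 - (\<integral>x. (q x)\<^sup>2 / p x \<partial>M) = (\<integral>x. 2 * q x - p x / 4 - (q x)\<^sup>2 / p x \<partial>M)"
    using int_p int_q int_chi total_p total_q by simp
  also have "\<dots> \<le> (\<integral>x. p x * \<phi> x + q x * (1 - \<phi> x) \<partial>M)"
    using int_p int_q int_chi int_p\<phi> int_q\<phi> p_pos \<phi>_bounds
    by (intro integral_mono testing_error_pointwise_bound) auto
  also have "\<dots> = (\<integral>x. p x * \<phi> x \<partial>M) + (\<integral>x. q x * (1 - \<phi> x) \<partial>M)"
    using int_p\<phi> int_q\<phi> by simp
  finally show ?thesis .
qed

lemma integrable_gauss_pdf_test: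
  assumes "\<sigma> > 0" and "is_test n \<phi>"
  shows "integrable (lborel_Pi n) (\<lambda>x. gauss_pdf n \<theta> \<sigma> x * \<phi> x)"
  using assms
  by (intro Bochner_Integration.integrable_bound[OF integrable_gauss_pdf[OF assms(1)]])
     (auto intro!: AE_I2 mult_right_le_one_le simp: abs_mult is_test_def less_imp_le gauss_pdf_pos)

lemma gauss_mixture_testing_bound:
  assumes "0 < J" and "0 < \<sigma>" and "is_test n \<phi>"
  shows "7/4 - (\<Sum>j<J. \<Sum>l<J. exp ((\<Sum>i<n. \<theta> j i * \<theta> l i) / \<sigma>\<^sup>2)) / (real J)\<^sup>2
    \<le> (\<integral>x. \<phi> x \<partial>gauss_meas n (\<lambda>_. 0) \<sigma>) + (\<Sum>j<J. \<integral>x. 1 - \<phi> x \<partial>gauss_meas n (\<theta> j) \<sigma>) / real J"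
proof -
  let ?p = "gauss_pdf n (\<lambda>_. 0) \<sigma>"
  let ?p\<theta> = "\<lambda>j. gauss_pdf n (\<theta> j) \<sigma>"
  define q where "q x = (\<Sum>j<J. ?p\<theta> j x) / real J" for x
  have \<phi>: "\<phi> \<in> borel_measurable (lborel_Pi n)" "\<And>x. x \<in> space (lborel_Pi n) \<Longrightarrow> 0 \<le> \<phi> x \<and> \<phi> x \<le> 1"
    using assms(3) by (auto simp: is_test_def)
  have chi: "(\<lambda>x. (q x)\<^sup>2 / ?p x) = (\<lambda>x. (\<Sum>j<J. \<Sum>l<J. ?p\<theta> j x * ?p\<theta> l x / ?p x) / (real J)\<^sup>2)"
    by (simp add: q_def power2_eq_square sum_product sum_divide_distrib mult.commute)
  have "7/4 - (\<integral>x. (q x)\<^sup>2 / ?p x \<partial>lborel_Pi n)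
      \<le> (\<integral>x. ?p x * \<phi> x \<partial>lborel_Pi n) + (\<integral>x. q x * (1 - \<phi> x) \<partial>lborel_Pi n)"
  proof (rule second_moment_testing_bound[OF gauss_pdf_pos[OF assms(2)] integrable_gauss_pdf[OF assms(2)]])
    show "integrable (lborel_Pi n) q"
      unfolding q_def using integrable_gauss_pdf[OF assms(2)] by auto
    show "integrable (lborel_Pi n) (\<lambda>x. (q x)\<^sup>2 / ?p x)"
      unfolding chi using gauss_pdf_cross(1)[OF assms(2)] by auto
    show "(\<integral>x. q x \<partial>lborel_Pi n) = 1"
      unfolding q_def using assms(1,2) integrable_gauss_pdf[OF assms(2)]
      by (simp add: integral_sum integral_gauss_pdf)
  qed (use \<phi> integral_gauss_pdf[OF assms(2)] in auto)
  moreover have "(\<integral>x. (q x)\<^sup>2 / ?p x \<partial>lborel_Pi n)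
      = (\<Sum>j<J. \<Sum>l<J. exp ((\<Sum>i<n. \<theta> j i * \<theta> l i) / \<sigma>\<^sup>2)) / (real J)\<^sup>2"
    unfolding chi using gauss_pdf_cross[OF assms(2)] by (simp add: integral_sum)
  moreover have "(\<integral>x. ?p x * \<phi> x \<partial>lborel_Pi n) = (\<integral>x. \<phi> x \<partial>gauss_meas n (\<lambda>_. 0) \<sigma>)"
    using integral_gauss_meas[OF assms(2) \<phi>(1)] by simp
  moreover have "(\<integral>x. q x * (1 - \<phi> x) \<partial>lborel_Pi n)
      = (\<Sum>j<J. \<integral>x. 1 - \<phi> x \<partial>gauss_meas n (\<theta> j) \<sigma>) / real J"
  proof -
    have "(\<integral>x. q x * (1 - \<phi> x) \<partial>lborel_Pi n) = (\<Sum>j<J. \<integral>x. ?p\<theta> j x * (1 - \<phi> x) \<partial>lborel_Pi n) / real J"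
      unfolding q_def sum_divide_distrib sum_distrib_right
      using integrable_gauss_pdf_test[OF assms(2) is_test_one_minus[OF assms(3)]]
      by (simp add: integral_sum)
    then show ?thesis
      using integral_gauss_meas[OF assms(2)] \<phi>(1) by simp
  qed
  ultimately show ?thesis by simp
qed

definition spike :: "real \<Rightarrow> real \<Rightarrow> nat \<Rightarrow> nat \<Rightarrow> real" where
  "spike \<sigma> b j i = (if i < 4 ^ j then \<sigma> * sqrt b / 2 ^ j else 0)"

lemma sum_indicator_initial:
  assumes "k \<le> n"
  shows "(\<Sum>i<n. if i < k then c else 0) = real k * (c :: real)"
proof -
  have "{..<n} \<inter> {i. i < k} = {..<k}" using assms by auto
  then show ?thesis by (simp add: sum.If_cases)
qed

text \<open>For natural numbers one of \<open>j - l\<close> and \<open>l - j\<close> is \<open>0\<close>, so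
  \<open>(1/2)^(j - l) * (1/2)^(l - j) = 2^-|j - l|\<close>.\<close>

lemma inner_spike:
  assumes "4 ^ j \<le> n" and "4 ^ l \<le> n" and "0 \<le> b"
  shows "(\<Sum>i<n. spike \<sigma> b j i * spike \<sigma> b l i) = \<sigma>\<^sup>2 * (b * ((1/2) ^ (j - l) * (1/2) ^ (l - j)))"
proof -
  have overlap: "(i < 4 ^ j \<and> i < 4 ^ l) \<longleftrightarrow> i < (4::nat) ^ min j l" for i
    by (auto simp: min_def dest: power_increasing[of _ _ "4::nat", OF _ _] intro: less_le_trans)
  have "(\<Sum>i<n. spike \<sigma> b j i * spike \<sigma> b l i)
      = (\<Sum>i<n. if i < 4 ^ min j l then \<sigma>\<^sup>2 * b / (2 ^ j * 2 ^ l) else 0)"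
    using assms(3) overlap by (intro sum.cong) (auto simp: spike_def power2_eq_square)
  also have "\<dots> = 4 ^ min j l * (\<sigma>\<^sup>2 * b / (2 ^ j * 2 ^ l))"
    using assms(1,2) by (subst sum_indicator_initial) (auto simp: min_def)
  also have "\<dots> = \<sigma>\<^sup>2 * (b * ((1/2) ^ (j - l) * (1/2) ^ (l - j)))"
  proof (cases "j \<le> l")
    case True
    then have "(2::real) ^ l = 2 ^ j * 2 ^ (l - j)" by (simp flip: power_add)
    with True show ?thesis by (simp add: min_def power_mult_distrib[symmetric] power_one_over field_simps)
  next
    case False
    then have "(2::real) ^ j = 2 ^ l * 2 ^ (j - l)" by (simp flip: power_add)
    with False show ?thesis by (simp add: min_def power_mult_distrib[symmetric] power_one_over field_simps)
  qed
  finally show ?thesis .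
qed

lemma sum_half_power_inj_less:
  assumes "finite A" and "inj_on f A"
  shows "(\<Sum>l\<in>A. (1/2::real) ^ f l) < 2"
  using geometric_sum_less[of "1/2::real" "f ` A"] assms by (simp add: sum.reindex)

lemma sum_half_power_dist_less: "(\<Sum>l<J. (1/2::real) ^ (j - l) * (1/2) ^ (l - j)) < 4"
proof -
  have split: "{..<J} = {l\<in>{..<J}. l \<le> j} \<union> {l\<in>{..<J}. j < l}" by auto
  have "(\<Sum>l<J. (1/2::real) ^ (j - l) * (1/2) ^ (l - j))
      = (\<Sum>l\<in>{l\<in>{..<J}. l \<le> j}. (1/2) ^ (j - l)) + (\<Sum>l\<in>{l\<in>{..<J}. j < l}. (1/2) ^ (l - j))"
    by (subst split, subst sum.union_disjoint) auto
  also have "\<dots> < 2 + 2"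
    by (intro add_strict_mono sum_half_power_inj_less) (auto simp: inj_on_def)
  finally show ?thesis by simp
qed

lemma exp_mult_le_chord:
  fixes b t :: real
  assumes "0 \<le> b" and "0 \<le> t" and "t \<le> 1"
  shows "exp (b * t) \<le> 1 + (exp b - 1) * t"
  using convex_onD[OF convex_on_exp[OF assms(1)], of t 0 1] assms(2,3) by (simp add: algebra_simps)

lemma sum_exp_half_power_dist_le:
  assumes "0 \<le> b"
  shows "(\<Sum>j<J. \<Sum>l<J. exp (b * ((1/2) ^ (j - l) * (1/2) ^ (l - j))))
    \<le> (real J)\<^sup>2 + 4 * real J * (exp b - 1)"
proof -
  have "(\<Sum>j<J. \<Sum>l<J. exp (b * ((1/2) ^ (j - l) * (1/2) ^ (l - j))))
      \<le> (\<Sum>j<J. \<Sum>l<J. 1 + (exp b - 1) * ((1/2) ^ (j - l) * (1/2) ^ (l - j)))"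
    using assms by (intro sum_mono exp_mult_le_chord) (auto intro!: mult_le_one power_le_one)
  also have "\<dots> = (\<Sum>j<J. real J + (exp b - 1) * (\<Sum>l<J. (1/2) ^ (j - l) * (1/2) ^ (l - j)))"
    by (simp add: sum.distrib sum_distrib_left)
  also have "\<dots> \<le> (\<Sum>j<J. real J + (exp b - 1) * 4)"
    using assms sum_half_power_dist_less
    by (intro sum_mono add_left_mono mult_left_mono) (auto intro: less_imp_le)
  also have "\<dots> = (real J)\<^sup>2 + 4 * real J * (exp b - 1)"
    by (simp add: power2_eq_square algebra_simps)
  finally show ?thesis .
qed

lemma obtain_dyadic_scales:
  fixes n :: nat
  assumes "2 \<le> n"
  obtains J :: nat where "1 \<le> J" and "n < 2 * 4 ^ J" and "\<And>j. j < J \<Longrightarrow> 2 * 4 ^ j \<le> n"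
proof -
  define J where "J = (LEAST J. n < 2 * 4 ^ J)"
  have "n < 2 * 4 ^ n"
    using less_exp[of n] power_mono[of "2::nat" 4 n] by linarith
  then have "n < 2 * 4 ^ J"
    unfolding J_def by (rule LeastI)
  moreover have "2 * 4 ^ j \<le> n" if "j < J" for j
    using not_less_Least[of j "\<lambda>J. n < 2 * 4 ^ J"] that unfolding J_def by simp
  moreover have "1 \<le> J"
    using assms \<open>n < 2 * 4 ^ J\<close> by (cases J) auto
  ultimately show ?thesis using that by blast
qed

lemma ln_16_less:
  assumes "n < 2 * 4 ^ J" and "1 \<le> J" and "0 < n"
  shows "ln (16 * real n) < 7 * real J"
proof -
  have "16 * real n < 32 * 4 ^ J"
  proof -
    have "real n < real (2 * 4 ^ J)" using assms(1) by (simp only: of_nat_less_iff)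
    then show ?thesis by simp
  qed
  also have "(32::real) * 4 ^ J = 2 ^ (5 + 2 * J)"
    by (simp add: power_add power_mult)
  also have "\<dots> \<le> exp 1 ^ (5 + 2 * J)"
    using exp_ge_add_one_self[of 1] by (intro power_mono) auto
  also have "\<dots> \<le> exp (7 * real J)"
    using assms(2) by (simp flip: exp_of_nat_mult)
  finally show ?thesis
    using assms(3) ln_less_cancel_iff[of "16 * real n" "exp (7 * real J)"] by simp
qed

lemma spike_in_Theta2c:
  assumes "0 < \<sigma>" and "2 * 4 ^ j \<le> n" and "n < 2 * 4 ^ J" and "1 \<le> J"
  shows "spike \<sigma> (ln (1 + real J / 100)) j \<in> Theta2c n \<sigma> (1/1000)"
proof -
  define b where "b = ln (1 + real J / 100)"
  define \<mu> where "\<mu> = \<sigma> * sqrt b / 2 ^ j"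
  have "0 \<le> b" by (simp add: b_def)
  have "(1::nat) \<le> 4 ^ j" by simp
  then have "0 < n" and "4 ^ j \<le> n" using assms(2) by linarith+
  have shape: "\<forall>i<n. spike \<sigma> b j i = (if i < 4 ^ j then \<mu> else 0)"
    by (simp add: spike_def \<mu>_def)
  have balance: "min (4 ^ j) (n - 4 ^ j) = (4::nat) ^ j"
    using assms(2) by simp
  have energy: "(0 - \<mu>)\<^sup>2 * real ((4::nat) ^ j) = \<sigma>\<^sup>2 * b"
  proof -
    have "(4::real) ^ j = (2 ^ j)\<^sup>2" by (simp add: power2_eq_square flip: power_mult_distrib)
    then show ?thesis using \<open>0 \<le> b\<close> by (simp add: \<mu>_def power_divide power_mult_distrib)
  qed
  have "ln (16 * real n) < 7 * real J"
    using ln_16_less[OF assms(3,4) \<open>0 < n\<close>] .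
  also have "\<dots> < 1 + real 1000 * (real J / 100)"
    by simp
  also have "\<dots> \<le> (1 + real J / 100) ^ 1000"
    by (rule Bernoulli_inequality) simp
  also have "\<dots> = exp (1000 * b)"
    using exp_of_nat_mult[of 1000 b] by (simp add: b_def add_pos_nonneg)
  finally have "ln (ln (16 * real n)) < 1000 * b"
    using \<open>0 < n\<close> ln_less_cancel_iff[of "ln (16 * real n)" "exp (1000 * b)"] by simp
  then have "1/1000 * \<sigma>\<^sup>2 * ln (ln (16 * real n)) < (0 - \<mu>)\<^sup>2 * real (min (4 ^ j) (n - 4 ^ j))"
    using assms(1) balance energy by simp
  then show ?thesis
    unfolding Theta2c_def Theta2_def b_def[symmetric]
    using shape \<open>4 ^ j \<le> n\<close> by blast
qed

lemma mean_le_cSUP: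
  fixes f :: "'a \<Rightarrow> real"
  assumes "0 < J" and "bdd_above (f ` A)" and "\<And>j. j < J \<Longrightarrow> g j \<in> A"
  shows "(\<Sum>j<J. f (g j)) / real J \<le> (SUP x\<in>A. f x)"
proof -
  have "(\<Sum>j<J. f (g j)) \<le> (\<Sum>j<J. SUP x\<in>A. f x)"
    using assms by (intro sum_mono cSUP_upper) auto
  then show ?thesis
    using assms(1) by (simp add: pos_divide_le_eq mult.commute)
qed

lemma spike_mixture_second_moment_le:
  assumes "0 < \<sigma>" and "1 \<le> J" and "\<And>j. j < J \<Longrightarrow> 4 ^ j \<le> n"
  defines "b \<equiv> ln (1 + real J / 100)"
  shows "(\<Sum>j<J. \<Sum>l<J. exp ((\<Sum>i<n. spike \<sigma> b j i * spike \<sigma> b l i) / \<sigma>\<^sup>2)) / (real J)\<^sup>2 \<le> 26/25"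
proof -
  have "0 \<le> b" and exp_b: "exp b = 1 + real J / 100"
    by (simp_all add: b_def add_pos_nonneg)
  have "(\<Sum>j<J. \<Sum>l<J. exp ((\<Sum>i<n. spike \<sigma> b j i * spike \<sigma> b l i) / \<sigma>\<^sup>2))
      = (\<Sum>j<J. \<Sum>l<J. exp (b * ((1/2) ^ (j - l) * (1/2) ^ (l - j))))"
    using assms(1,3) by (intro sum.cong refl) (simp add: inner_spike[OF _ _ \<open>0 \<le> b\<close>])
  also have "\<dots> \<le> (real J)\<^sup>2 + 4 * real J * (exp b - 1)"
    by (rule sum_exp_half_power_dist_le[OF \<open>0 \<le> b\<close>])
  also have "\<dots> = (real J)\<^sup>2 * (26/25)"
    by (simp add: exp_b power2_eq_square)
  finally show ?thesis
    using assms(2) by (simp add: pos_divide_le_eq)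
qed

lemma testing_risk_ge_half:
  assumes "2 \<le> n" and "0 < \<sigma>" and "is_test n \<phi>"
  shows "1/2 \<le> (SUP \<theta>\<in>Theta1 n. \<integral>x. \<phi> x \<partial>gauss_meas n \<theta> \<sigma>)
      + (SUP \<theta>\<in>Theta2c n \<sigma> (1/1000). \<integral>x. (1 - \<phi> x) \<partial>gauss_meas n \<theta> \<sigma>)"
proof -
  obtain J where J: "1 \<le> J" "n < 2 * 4 ^ J" and scales: "\<And>j. j < J \<Longrightarrow> 2 * 4 ^ j \<le> n"
    using obtain_dyadic_scales[OF assms(1)] by blast
  define b where "b = ln (1 + real J / 100)"
  have bdd: "bdd_above ((\<lambda>\<theta>. \<integral>x. \<psi> x \<partial>gauss_meas n \<theta> \<sigma>) ` \<Theta>)" if "is_test n \<psi>" for \<psi> \<Theta>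
    using integral_test_le_one[OF assms(2) that] by (intro bdd_aboveI2) auto
  have "(\<integral>x. \<phi> x \<partial>gauss_meas n (\<lambda>_. 0) \<sigma>) \<le> (SUP \<theta>\<in>Theta1 n. \<integral>x. \<phi> x \<partial>gauss_meas n \<theta> \<sigma>)"
    using bdd[OF assms(3)] by (intro cSUP_upper) (auto simp: Theta1_def)
  moreover have "(\<Sum>j<J. \<integral>x. 1 - \<phi> x \<partial>gauss_meas n (spike \<sigma> b j) \<sigma>) / real J
      \<le> (SUP \<theta>\<in>Theta2c n \<sigma> (1/1000). \<integral>x. (1 - \<phi> x) \<partial>gauss_meas n \<theta> \<sigma>)"
    using J bdd[OF is_test_one_minus[OF assms(3)]] spike_in_Theta2c[OF assms(2) scales J(2,1)]
    by (intro mean_le_cSUP) (auto simp: b_def)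
  moreover have "7/4 - (\<Sum>j<J. \<Sum>l<J. exp ((\<Sum>i<n. spike \<sigma> b j i * spike \<sigma> b l i) / \<sigma>\<^sup>2)) / (real J)\<^sup>2
      \<le> (\<integral>x. \<phi> x \<partial>gauss_meas n (\<lambda>_. 0) \<sigma>) + (\<Sum>j<J. \<integral>x. 1 - \<phi> x \<partial>gauss_meas n (spike \<sigma> b j) \<sigma>) / real J"
    using J(1) assms(2,3) by (intro gauss_mixture_testing_bound) auto
  moreover have "(\<Sum>j<J. \<Sum>l<J. exp ((\<Sum>i<n. spike \<sigma> b j i * spike \<sigma> b l i) / \<sigma>\<^sup>2)) / (real J)\<^sup>2 \<le> 26/25"
  proof -
    have "4 ^ j \<le> n" if "j < J" for j
      using scales[OF that] by linarith
    then show ?thesis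
      unfolding b_def by (rule spike_mixture_second_moment_le[OF assms(2) J(1)])
  qed
  ultimately show ?thesis by linarith
qed

theorem mainTheorem8:
  shows "\<exists>c::real. c > 0 \<and> (\<exists>c1::real. 0 < c1 \<and> c1 < 1 \<and>
    (\<forall>n::nat. n \<ge> 2 \<longrightarrow> (\<forall>\<sigma>::real. \<sigma> > 0 \<longrightarrow> (\<forall>\<phi>. is_test n \<phi> \<longrightarrow>
      (SUP \<theta>\<in>Theta1 n. \<integral>x. \<phi> x \<partial>gauss_meas n \<theta> \<sigma>)
      + (SUP \<theta>\<in>Theta2c n \<sigma> c. \<integral>x. (1 - \<phi> x) \<partial>gauss_meas n \<theta> \<sigma>) \<ge> c1))))"
  using testing_risk_ge_half by (intro exI[of _ "1/1000"]) (auto intro!: exI[of _ "1/2"])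

end
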